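(* In a discrete Dubins path, an inflection edge can be adjacent only to a non-inflection normal edge.
   Context: Fix an angle $\theta$ with $0\le\theta\le\pi/2$ such that $2\pi/\theta$ is an integer, and a length $\ell>0$. For a polygonal path, the turn at an internal vertex is the angle in $[0,\pi]$ between the direction of the incoming edge and the direction of the outgoing edge. An edge is short if its length is $<\ell$, normal if $=\ell$, long if $>\ell$. An edge $e$ with an adjacent edge at each end is an inflection edge if its two adjacent edges lie on opposite sides of the supporting line of $e$ (equivalently, the path turns in opposite directions at the two endpoints of $e$), and non-inflection otherwise. A discrete curvature-constrained path is a polygonal path such that: (i) the turn at every internal vertex is at most $\theta$; (ii) no two adjacent edges are both short; (iii) for every short non-inflection edge $ab$ with adjacent edges $a^-a$ and $bb^+$, the angle between the directions $\overrightarrow{a^-a}$ and $\overrightarrow{bb^+}$ is at most $\theta$. A configuration is a pair $(u,U)$ of a point $u$ and a vector $U$ of length $\ell$. A polygonal path $P$ with first vertex $u$ starts at $(u,U)$ if prepending the segment from $u-U$ to $u$ (the pre-edge) yields a discrete curvature-constrained path; $P$ with last vertex $v$ ends at $(v,V)$ if appending the segment from $v$ to $v+V$ (the post-edge) yields a discrete curvature-constrained path. A discrete Dubins path is a discrete curvature-constrained path of minimum length among all those starting at a given configuration $\mathcal U$ and ending at a given configuration $\mathcal V$. Standing assumption: paths make a non-zero turn at every internal vertex. *)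

theory Defs
  imports "HOL-Analysis.Analysis"
begin

text \<open>Points of the plane are complex numbers. A polygonal path is the nonempty list
  of its vertices; edge i goes from vertex i to vertex i+1.\<close>

definition nedges :: "complex list \<Rightarrow> nat" where
  "nedges xs = length xs - 1"

definition edir :: "complex list \<Rightarrow> nat \<Rightarrow> complex" where
  "edir xs i = xs ! Suc i - xs ! i"

definition dir_angle :: "complex \<Rightarrow> complex \<Rightarrow> real" where
  "dir_angle a b = arccos (inner a b / (norm a * norm b))"

text \<open>Signed cross product: positive for a left turn from a to b, negative for right.\<close>
definition cross :: "complex \<Rightarrow> complex \<Rightarrow> real" where
  "cross a b = Im (cnj a * b)"

definition short_edge :: "real \<Rightarrow> complex list \<Rightarrow> nat \<Rightarrow> bool" where
  "short_edge l xs i \<longleftrightarrow> norm (edir xs i) < l"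

definition normal_edge :: "real \<Rightarrow> complex list \<Rightarrow> nat \<Rightarrow> bool" where
  "normal_edge l xs i \<longleftrightarrow> norm (edir xs i) = l"

definition long_edge :: "real \<Rightarrow> complex list \<Rightarrow> nat \<Rightarrow> bool" where
  "long_edge l xs i \<longleftrightarrow> norm (edir xs i) > l"

definition has_both_neighbours :: "complex list \<Rightarrow> nat \<Rightarrow> bool" where
  "has_both_neighbours xs i \<longleftrightarrow> 0 < i \<and> Suc i < nedges xs"

text \<open>The two adjacent edges lie strictly on opposite sides of the supporting line,
  i.e. the path turns in opposite directions at the two endpoints.\<close>
definition inflection_edge :: "complex list \<Rightarrow> nat \<Rightarrow> bool" where
  "inflection_edge xs i \<longleftrightarrow> has_both_neighbours xs i \<and>
     cross (edir xs (i - 1)) (edir xs i) * cross (edir xs i) (edir xs (Suc i)) < 0"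

definition non_inflection_edge :: "complex list \<Rightarrow> nat \<Rightarrow> bool" where
  "non_inflection_edge xs i \<longleftrightarrow> has_both_neighbours xs i \<and> \<not> inflection_edge xs i"

definition dcc_path :: "real \<Rightarrow> real \<Rightarrow> complex list \<Rightarrow> bool" where
  "dcc_path \<theta> l xs \<longleftrightarrow>
     xs \<noteq> [] \<and>
     (\<forall>i < nedges xs. edir xs i \<noteq> 0) \<and>
     (\<forall>j. 0 < j \<and> j < nedges xs \<longrightarrow> dir_angle (edir xs (j - 1)) (edir xs j) \<le> \<theta>) \<and>
     (\<forall>i. Suc i < nedges xs \<longrightarrow> \<not> (short_edge l xs i \<and> short_edge l xs (Suc i))) \<and>
     (\<forall>i. short_edge l xs i \<and> non_inflection_edge xs i \<longrightarrow>
           dir_angle (edir xs (i - 1)) (edir xs (Suc i)) \<le> \<theta>)"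

definition path_length :: "complex list \<Rightarrow> real" where
  "path_length xs = (\<Sum>i < nedges xs. norm (edir xs i))"

definition starts_at :: "real \<Rightarrow> real \<Rightarrow> complex list \<Rightarrow> complex \<Rightarrow> complex \<Rightarrow> bool" where
  "starts_at \<theta> l xs u U \<longleftrightarrow> xs \<noteq> [] \<and> hd xs = u \<and> dcc_path \<theta> l ((u - U) # xs)"

definition ends_at :: "real \<Rightarrow> real \<Rightarrow> complex list \<Rightarrow> complex \<Rightarrow> complex \<Rightarrow> bool" where
  "ends_at \<theta> l xs v V \<longleftrightarrow> xs \<noteq> [] \<and> last xs = v \<and> dcc_path \<theta> l (xs @ [v + V])"

definition discrete_dubins_path ::
  "real \<Rightarrow> real \<Rightarrow> complex \<Rightarrow> complex \<Rightarrow> complex \<Rightarrow> complex \<Rightarrow> complex list \<Rightarrow> bool" where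
  "discrete_dubins_path \<theta> l u U v V P \<longleftrightarrow>
     dcc_path \<theta> l P \<and> starts_at \<theta> l P u U \<and> ends_at \<theta> l P v V \<and>
     (\<forall>Q. dcc_path \<theta> l Q \<and> starts_at \<theta> l Q u U \<and> ends_at \<theta> l Q v V \<longrightarrow>
          path_length P \<le> path_length Q)"

definition extended_path :: "complex list \<Rightarrow> complex \<Rightarrow> complex \<Rightarrow> complex list" where
  "extended_path P U V = (hd P - U) # P @ [last P + V]"

definition nonzero_turns :: "complex list \<Rightarrow> bool" where
  "nonzero_turns xs \<longleftrightarrow> (\<forall>j. 0 < j \<and> j < nedges xs \<longrightarrow> dir_angle (edir xs (j - 1)) (edir xs j) \<noteq> 0)"

end

theory Submission
  imports Defs
begin

text \<open>If an inflection edge of the extended path had a neighbour that is not normal, or that is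
  itself an inflection edge, some vertex strictly inside \<open>P\<close> could be slid a little along one of its
  edges. Sliding the common vertex of edges \<open>p\<close> and \<open>p + 1\<close> the fraction \<open>t\<close> towards the far end
  of edge \<open>p + 1\<close> replaces the direction \<open>d p\<close> of edge \<open>p\<close> by \<open>d p + t d (p + 1)\<close> and shrinks edge
  \<open>p + 1\<close> by the factor \<open>1 - t\<close>. The path gets strictly shorter, as the turn between the two edges
  is not zero. If edge \<open>p\<close> is an inflection edge, the new edge \<open>p\<close> rotates towards \<open>d (p - 1)\<close>, so
  for small \<open>t\<close> no turn exceeds \<open>\<theta>\<close>, no turn changes its sign and the rules on short edges
  survive; the hypotheses on the neighbours take care of the edge that may become short. This
  contradicts the minimality of \<open>P\<close>.\<close>

section \<open>Planar vector algebra\<close>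

lemma cross_eq: "cross a b = Re a * Im b - Im a * Re b"
  by (simp add: cross_def)

lemma cross_commute: "cross b a = - cross a b"
  by (simp add: cross_eq)

lemma cross_self [simp]: "cross a a = 0"
  by (simp add: cross_eq)

lemma cross_minus_minus [simp]: "cross (- a) (- b) = cross a b"
  by (simp add: cross_eq)

lemma cross_add_left: "cross (a + b) c = cross a c + cross b c"
  by (simp add: cross_eq algebra_simps)

lemma cross_add_right: "cross a (b + c) = cross a b + cross a c"
  by (simp add: cross_eq algebra_simps)

lemma cross_scaleR_left [simp]: "cross (r *\<^sub>R a) b = r * cross a b"
  by (simp add: cross_eq scaleR_conv_of_real algebra_simps)

lemma cross_scaleR_right [simp]: "cross a (r *\<^sub>R b) = r * cross a b"
  by (simp add: cross_eq scaleR_conv_of_real algebra_simps)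

lemma inner_square_add_cross_square: "(inner a b)\<^sup>2 + (cross a b)\<^sup>2 = (norm a)\<^sup>2 * (norm b)\<^sup>2"
  by (simp only: cross_eq inner_complex_def cmod_power2) algebra

lemma norm_square_mult_inner: "(norm b)\<^sup>2 * inner a c = inner a b * inner b c - cross a b * cross b c"
  by (simp only: cross_eq inner_complex_def cmod_power2) algebra

lemma norm_square_mult_cross: "(norm b)\<^sup>2 * cross a c = cross a b * inner b c + inner a b * cross b c"
  by (simp only: cross_eq inner_complex_def cmod_power2) algebra

lemma norm_add_scaleR_square:
  fixes y z :: "'a::real_inner"
  shows "(norm (y + t *\<^sub>R z))\<^sup>2 = (norm y)\<^sup>2 + 2 * t * inner y z + t\<^sup>2 * (norm z)\<^sup>2"
  unfolding power2_norm_eq_inner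
  by (simp add: inner_commute[of z y] power2_eq_square algebra_simps)

lemma norm_add_scaleR_less:
  assumes "cross x y \<noteq> 0" and "0 < t"
  shows "norm (x + t *\<^sub>R y) < norm x + t * norm y"
proof -
  have "0 < (cross x y)\<^sup>2"
    using assms(1) by simp
  then have "(inner x y)\<^sup>2 < (norm x * norm y)\<^sup>2"
    using inner_square_add_cross_square[of x y] unfolding power_mult_distrib by linarith
  then have "inner x y < norm x * norm y"
    using abs_le_square_iff abs_less_iff power2_less_imp_less by fastforce
  then have "(norm (x + t *\<^sub>R y))\<^sup>2 < (norm x + t * norm y)\<^sup>2"
    using assms(2) unfolding norm_add_scaleR_square by (simp add: power2_eq_square algebra_simps)
  then show ?thesis
    using assms(2) by (simp add: power2_less_imp_less)
qed

lemma cross_compose_pos_left: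
  assumes "y \<noteq> 0" "z \<noteq> 0" "cross x y \<noteq> 0" "0 \<le> cross x y * cross y z"
    and "0 \<le> inner x y" "0 \<le> inner y z" "0 \<le> inner x z"
  shows "0 < cross x z * cross x y"
proof -
  have "0 < inner y z"
  proof (rule ccontr)
    assume "\<not> 0 < inner y z"
    then have "inner y z = 0"
      using assms(6) by simp
    moreover have "0 \<le> (norm y)\<^sup>2 * inner x z"
      using assms(7) by simp
    ultimately have "cross x y * cross y z = 0"
      using norm_square_mult_inner[where a = x and b = y and c = z] assms(4) by simp
    then have "cross y z = 0"
      using assms(3) by simp
    then show False
      using \<open>inner y z = 0\<close> inner_square_add_cross_square[of y z] assms(1,2) by simp
  qed
  then have "0 < (cross x y)\<^sup>2 * inner y z + inner x y * (cross x y * cross y z)"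
    using assms(3-5) by (simp add: add_pos_nonneg)
  also have "\<dots> = (norm y)\<^sup>2 * (cross x z * cross x y)"
    using norm_square_mult_cross[where a = x and b = y and c = z]
    by (simp add: power2_eq_square algebra_simps)
  finally show ?thesis
    using assms(1) by (simp add: zero_less_mult_iff)
qed

lemma cross_compose_pos_right:
  assumes "x \<noteq> 0" "y \<noteq> 0" "cross y z \<noteq> 0" "0 \<le> cross x y * cross y z"
    and "0 \<le> inner x y" "0 \<le> inner y z" "0 \<le> inner x z"
  shows "0 < cross x z * cross y z"
  using cross_compose_pos_left[of "- y" "- x" "- z"] assms
  by (simp add: inner_commute cross_commute[of z x] cross_commute[of z y] cross_commute[of y x]
      mult.commute)

section \<open>Angles between directions\<close>

definition dir_cos :: "complex \<Rightarrow> complex \<Rightarrow> real" where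
  "dir_cos a b = inner a b / (norm a * norm b)"

lemma dir_angle_eq_arccos: "dir_angle a b = arccos (dir_cos a b)"
  by (simp add: dir_angle_def dir_cos_def)

lemma abs_dir_cos_le_1: "\<bar>dir_cos a b\<bar> \<le> 1"
proof (cases "a = 0 \<or> b = 0")
  case False
  then show ?thesis
    using Cauchy_Schwarz_ineq2[of a b] by (simp add: dir_cos_def divide_le_eq_1)
qed (auto simp: dir_cos_def)

lemma dir_angle_le_iff:
  assumes "0 \<le> \<theta>" "\<theta> \<le> pi"
  shows "dir_angle a b \<le> \<theta> \<longleftrightarrow> cos \<theta> \<le> dir_cos a b"
  using arccos_le_mono[OF abs_dir_cos_le_1 abs_cos_le_one, of a b \<theta>] arccos_cos[OF assms]
  by (simp add: dir_angle_eq_arccos)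

lemma dir_angle_less_iff:
  assumes "0 \<le> \<theta>" "\<theta> \<le> pi"
  shows "dir_angle a b < \<theta> \<longleftrightarrow> cos \<theta> < dir_cos a b"
  using arccos_less_mono[OF abs_dir_cos_le_1 abs_cos_le_one, of a b \<theta>] arccos_cos[OF assms]
  by (simp add: dir_angle_eq_arccos)

lemma dir_angle_nonneg: "0 \<le> dir_angle a b"
  using abs_dir_cos_le_1[of a b] by (simp add: dir_angle_eq_arccos arccos_lbound)

lemma dir_angle_commute: "dir_angle b a = dir_angle a b"
  by (simp add: dir_angle_def inner_commute mult.commute)

lemma dir_angle_scaleR_right [simp]: "0 < r \<Longrightarrow> dir_angle a (r *\<^sub>R b) = dir_angle a b"
  by (simp add: dir_angle_def)

lemma dir_angle_scaleR_left [simp]: "0 < r \<Longrightarrow> dir_angle (r *\<^sub>R a) b = dir_angle a b"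
  by (metis dir_angle_commute dir_angle_scaleR_right)

lemma dir_angle_minus_minus [simp]: "dir_angle (- a) (- b) = dir_angle a b"
  by (simp add: dir_angle_def)

lemma inner_nonneg_if_dir_angle_le:
  assumes "dir_angle a b \<le> \<theta>" "\<theta> \<le> pi / 2"
  shows "0 \<le> inner a b"
proof -
  have "0 \<le> \<theta>"
    using assms(1) dir_angle_nonneg order_trans by blast
  then have "0 \<le> dir_cos a b"
    using assms cos_ge_zero[of \<theta>] dir_angle_le_iff[of \<theta> a b] by simp
  then show ?thesis
    by (cases "a = 0 \<or> b = 0") (auto simp: dir_cos_def zero_le_divide_iff mult_le_0_iff)
qed

lemma has_real_derivative_dir_cos_add_scaleR:
  assumes "x \<noteq> 0" "y \<noteq> 0"
  shows "((\<lambda>t. dir_cos x (y + t *\<^sub>R z)) has_real_derivative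
           cross y x * cross y z / (norm x * norm y ^ 3)) (at 0)"
proof -
  define q where "q t = (norm y)\<^sup>2 + 2 * t * inner y z + t\<^sup>2 * (norm z)\<^sup>2" for t
  have "norm (y + t *\<^sub>R z) = sqrt (q t)" for t
    unfolding q_def norm_add_scaleR_square[symmetric] by simp
  then have dir_cos_eq: "dir_cos x (y + t *\<^sub>R z) = (inner x y + t * inner x z) / (norm x * sqrt (q t))" for t
    by (simp add: dir_cos_def inner_add_right)
  have "(q has_real_derivative 2 * inner y z) (at 0)"
    unfolding q_def by (auto intro!: derivative_eq_intros)
  from DERIV_chain2[OF DERIV_real_sqrt this]
  have "((\<lambda>t. sqrt (q t)) has_real_derivative inner y z / norm y) (at 0)"
    using assms by (simp add: q_def field_simps)
  moreover have "((\<lambda>t. inner x y + t * inner x z) has_real_derivative inner x z) (at 0)"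
    by (auto intro!: derivative_eq_intros)
  ultimately have "((\<lambda>t. (inner x y + t * inner x z) / (norm x * sqrt (q t))) has_real_derivative
      (inner x z * (norm x * sqrt (q 0)) - (inner x y + 0 * inner x z) * (norm x * (inner y z / norm y)))
        / ((norm x * sqrt (q 0)) * (norm x * sqrt (q 0)))) (at 0)"
    using assms by (intro DERIV_divide DERIV_cmult) (simp_all add: q_def)
  moreover have "(inner x z * (norm x * sqrt (q 0)) - (inner x y + 0 * inner x z) * (norm x * (inner y z / norm y)))
        / ((norm x * sqrt (q 0)) * (norm x * sqrt (q 0))) = cross y x * cross y z / (norm x * norm y ^ 3)"
    using assms norm_square_mult_inner[of y x z] cross_commute[of x y]
    by (simp add: q_def field_simps power2_eq_square power3_eq_cube)
  ultimately show ?thesis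
    unfolding dir_cos_eq by simp
qed

text \<open>Perturbing \<open>y\<close> towards \<open>z\<close> keeps the angle with \<open>x\<close> below \<open>\<theta>\<close>: either there is slack,
  or \<open>z\<close> lies on the side of \<open>y\<close> facing \<open>x\<close>, so the angle decreases at first order.\<close>

lemma eventually_dir_angle_le_add:
  assumes "x \<noteq> 0" "y \<noteq> 0" "\<theta> \<le> pi / 2" "dir_angle x y \<le> \<theta>"
    and "dir_angle x y < \<theta> \<or> 0 < cross y x * cross y z"
  shows "\<forall>\<^sub>F t in at_right 0. dir_angle x (y + t *\<^sub>R z) \<le> \<theta>"
proof -
  define f where "f t = dir_cos x (y + t *\<^sub>R z)" for t
  have \<theta>: "0 \<le> \<theta>" "\<theta> \<le> pi"
    using assms(3,4) dir_angle_nonneg[of x y] by linarith+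
  have deriv: "(f has_real_derivative cross y x * cross y z / (norm x * norm y ^ 3)) (at 0)"
    unfolding f_def by (rule has_real_derivative_dir_cos_add_scaleR[OF assms(1,2)])
  have "\<forall>\<^sub>F t in at_right 0. cos \<theta> \<le> f t"
    using assms(5)
  proof
    assume "dir_angle x y < \<theta>"
    then have "cos \<theta> < f 0"
      using dir_angle_less_iff[OF \<theta>] by (simp add: f_def)
    moreover have "(f \<longlongrightarrow> f 0) (at_right 0)"
      using DERIV_isCont[OF deriv] by (simp add: isCont_def filterlim_at_split)
    ultimately have "\<forall>\<^sub>F t in at_right 0. cos \<theta> < f t"
      by (simp add: order_tendstoD(1))
    then show ?thesis
      by eventually_elim simp
  next
    assume "0 < cross y x * cross y z"
    then obtain d where "0 < d" "\<And>h. 0 < h \<Longrightarrow> h < d \<Longrightarrow> f 0 < f h"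
      using DERIV_pos_inc_right[OF deriv] assms(1,2) by auto
    moreover have "cos \<theta> \<le> f 0"
      using assms(4) dir_angle_le_iff[OF \<theta>] by (simp add: f_def)
    ultimately show ?thesis
      unfolding eventually_at_right_field by (metis less_imp_le order_trans)
  qed
  then show ?thesis
    by eventually_elim (simp add: f_def dir_angle_le_iff[OF \<theta>])
qed

section \<open>Sub-paths and reversal\<close>

lemma edir_append_infix:
  "Suc k < length xs \<Longrightarrow> edir (as @ xs @ bs) (length as + k) = edir xs k"
  by (simp add: edir_def nth_append)

lemma nedges_Cons [simp]: "xs \<noteq> [] \<Longrightarrow> nedges (a # xs) = Suc (nedges xs)"
  by (simp add: nedges_def)

lemma nedges_snoc [simp]: "xs \<noteq> [] \<Longrightarrow> nedges (xs @ [b]) = Suc (nedges xs)"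
  by (simp add: nedges_def)

lemma dcc_pathI:
  assumes "xs \<noteq> []"
    and "\<And>i. i < nedges xs \<Longrightarrow> edir xs i \<noteq> 0"
    and "\<And>j. 0 < j \<Longrightarrow> j < nedges xs \<Longrightarrow> dir_angle (edir xs (j - 1)) (edir xs j) \<le> \<theta>"
    and "\<And>i. Suc i < nedges xs \<Longrightarrow> \<not> (short_edge l xs i \<and> short_edge l xs (Suc i))"
    and "\<And>i. short_edge l xs i \<Longrightarrow> non_inflection_edge xs i \<Longrightarrow>
           dir_angle (edir xs (i - 1)) (edir xs (Suc i)) \<le> \<theta>"
  shows "dcc_path \<theta> l xs"
  using assms by (simp add: dcc_path_def)

lemma dcc_pathD:
  assumes "dcc_path \<theta> l xs"
  shows "xs \<noteq> []"
    and "i < nedges xs \<Longrightarrow> edir xs i \<noteq> 0"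
    and "0 < j \<Longrightarrow> j < nedges xs \<Longrightarrow> dir_angle (edir xs (j - 1)) (edir xs j) \<le> \<theta>"
    and "Suc i < nedges xs \<Longrightarrow> \<not> (short_edge l xs i \<and> short_edge l xs (Suc i))"
    and "short_edge l xs i \<Longrightarrow> non_inflection_edge xs i \<Longrightarrow>
           dir_angle (edir xs (i - 1)) (edir xs (Suc i)) \<le> \<theta>"
  using assms by (auto simp: dcc_path_def)

definition dcc_at :: "real \<Rightarrow> real \<Rightarrow> complex list \<Rightarrow> nat \<Rightarrow> bool" where
  "dcc_at \<theta> l xs i \<longleftrightarrow>
     (i < nedges xs \<longrightarrow> edir xs i \<noteq> 0) \<and>
     (0 < i \<and> i < nedges xs \<longrightarrow> dir_angle (edir xs (i - 1)) (edir xs i) \<le> \<theta>) \<and>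
     (Suc i < nedges xs \<longrightarrow> \<not> (short_edge l xs i \<and> short_edge l xs (Suc i))) \<and>
     (short_edge l xs i \<and> non_inflection_edge xs i \<longrightarrow>
        dir_angle (edir xs (i - 1)) (edir xs (Suc i)) \<le> \<theta>)"

lemma dcc_path_iff_dcc_at: "dcc_path \<theta> l xs \<longleftrightarrow> xs \<noteq> [] \<and> (\<forall>i. dcc_at \<theta> l xs i)"
  by (simp add: dcc_path_def dcc_at_def all_conj_distrib)

lemma dcc_at_transfer:
  assumes ys: "dcc_at \<theta> l ys j"
    and bounds: "0 < i \<Longrightarrow> 0 < j" "i < nedges xs \<Longrightarrow> j < nedges ys"
      "Suc i < nedges xs \<Longrightarrow> Suc j < nedges ys"
    and edges: "0 < i \<Longrightarrow> i < nedges xs \<Longrightarrow> edir xs (i - 1) = edir ys (j - 1)"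
      "i < nedges xs \<Longrightarrow> edir xs i = edir ys j"
      "Suc i < nedges xs \<Longrightarrow> edir xs (Suc i) = edir ys (Suc j)"
  shows "dcc_at \<theta> l xs i"
  unfolding dcc_at_def
proof (intro conjI impI)
  note ys = ys[unfolded dcc_at_def]
  show "edir xs i \<noteq> 0" if "i < nedges xs"
    using ys that bounds edges by simp
  show "dir_angle (edir xs (i - 1)) (edir xs i) \<le> \<theta>" if "0 < i \<and> i < nedges xs"
    using ys that bounds edges by simp
  show "\<not> (short_edge l xs i \<and> short_edge l xs (Suc i))" if "Suc i < nedges xs"
    using ys that bounds edges by (simp add: short_edge_def)
  show "dir_angle (edir xs (i - 1)) (edir xs (Suc i)) \<le> \<theta>"
    if "short_edge l xs i \<and> non_inflection_edge xs i"
  proof -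
    have "0 < i" "Suc i < nedges xs"
      using that by (auto simp: non_inflection_edge_def has_both_neighbours_def)
    moreover from this have "non_inflection_edge ys j"
      using that bounds edges
      by (auto simp: non_inflection_edge_def inflection_edge_def has_both_neighbours_def)
    ultimately show ?thesis
      using ys that bounds edges by (simp add: short_edge_def)
  qed
qed

lemma dcc_path_infix:
  assumes dcc: "dcc_path \<theta> l (as @ xs @ bs)" and "xs \<noteq> []"
  shows "dcc_path \<theta> l xs"
  unfolding dcc_path_iff_dcc_at
proof (intro conjI allI)
  fix k
  have m: "length as + nedges xs \<le> nedges (as @ xs @ bs)"
    using assms(2) by (cases xs) (simp_all add: nedges_def)
  have edir: "edir (as @ xs @ bs) (length as + k') = edir xs k'" if "k' < nedges xs" for k'
    using that edir_append_infix[of k' xs as bs] by (simp add: nedges_def)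
  show "dcc_at \<theta> l xs k"
  proof (rule dcc_at_transfer[where ys = "as @ xs @ bs" and j = "length as + k"])
    show "dcc_at \<theta> l (as @ xs @ bs) (length as + k)"
      using dcc by (simp add: dcc_path_iff_dcc_at)
    show "edir xs (k - 1) = edir (as @ xs @ bs) (length as + k - 1)" if "0 < k" "k < nedges xs"
      using that edir[of "k - 1"] by simp
  qed (use m edir[of k] edir[of "Suc k"] in auto)
qed (rule assms(2))

lemma dcc_path_overlap_append:
  assumes L: "dcc_path \<theta> l (as @ xs)" and R: "dcc_path \<theta> l (xs @ bs)" and n: "3 \<le> length xs"
  shows "dcc_path \<theta> l (as @ xs @ bs)"
  unfolding dcc_path_iff_dcc_at
proof (intro conjI allI)
  show "as @ xs @ bs \<noteq> []"
    using n by auto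
  fix i
  define s where "s = length as"
  have edL: "edir (as @ xs @ bs) k = edir (as @ xs) k" if "Suc k < s + length xs" for k
    using that edir_append_infix[of k "as @ xs" "[]" bs] by (simp add: s_def)
  have edR: "edir (as @ xs @ bs) (s + k) = edir (xs @ bs) k" if "Suc k < length xs + length bs" for k
    using that edir_append_infix[of k "xs @ bs" as "[]"] by (simp add: s_def)
  show "dcc_at \<theta> l (as @ xs @ bs) i"
  proof (cases "i + 2 < s + length xs")
    case True
    show ?thesis
      by (rule dcc_at_transfer[where ys = "as @ xs" and j = i])
        (use L True edL in \<open>auto simp: dcc_path_iff_dcc_at nedges_def s_def\<close>)
  next
    case False
    then have "s < i"
      using n by linarith
    then obtain k where k: "i = s + k" "0 < k"
      by (metis less_imp_add_positive)
    show ?thesis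
    proof (rule dcc_at_transfer[where ys = "xs @ bs" and j = k])
      show "dcc_at \<theta> l (xs @ bs) k"
        using R by (simp add: dcc_path_iff_dcc_at)
      show "edir (as @ xs @ bs) (i - 1) = edir (xs @ bs) (k - 1)"
        if "i < nedges (as @ xs @ bs)"
        using that k edR[of "k - 1"] by (simp add: nedges_def s_def)
    qed (use k edR[of k] edR[of "Suc k"] in \<open>simp_all add: nedges_def s_def\<close>)
  qed
qed

lemma nedges_rev [simp]: "nedges (rev xs) = nedges xs"
  by (simp add: nedges_def)

lemma edir_rev: "i < nedges xs \<Longrightarrow> edir (rev xs) i = - edir xs (nedges xs - 1 - i)"
  by (simp add: edir_def nedges_def rev_nth Suc_diff_Suc)

lemma short_edge_rev:
  "i < nedges xs \<Longrightarrow> short_edge l (rev xs) i \<longleftrightarrow> short_edge l xs (nedges xs - 1 - i)"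
  by (simp add: short_edge_def edir_rev)

lemma normal_edge_rev:
  "i < nedges xs \<Longrightarrow> normal_edge l (rev xs) i \<longleftrightarrow> normal_edge l xs (nedges xs - 1 - i)"
  by (simp add: normal_edge_def edir_rev)

lemma has_both_neighbours_rev:
  "i < nedges xs \<Longrightarrow> has_both_neighbours (rev xs) i \<longleftrightarrow> has_both_neighbours xs (nedges xs - 1 - i)"
  by (auto simp: has_both_neighbours_def)

lemma inflection_edge_rev:
  assumes "i < nedges xs"
  shows "inflection_edge (rev xs) i \<longleftrightarrow> inflection_edge xs (nedges xs - 1 - i)"
proof (cases "has_both_neighbours (rev xs) i")
  case True
  define m where "m = nedges xs"
  have i: "0 < i" "Suc i < m"
    using True by (simp_all add: has_both_neighbours_def m_def)
  have "edir (rev xs) (i - 1) = - edir xs (Suc (m - 1 - i))" "edir (rev xs) i = - edir xs (m - 1 - i)"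
    "edir (rev xs) (Suc i) = - edir xs (m - 1 - i - 1)"
    using i edir_rev[of "i - 1" xs] edir_rev[of i xs] edir_rev[of "Suc i" xs]
    by (simp_all add: m_def Suc_diff_Suc)
  moreover have "cross (edir xs (m - 1 - i)) (edir xs (Suc (m - 1 - i)))
      = - cross (edir xs (Suc (m - 1 - i))) (edir xs (m - 1 - i))"
    "cross (edir xs (m - 1 - i - 1)) (edir xs (m - 1 - i))
      = - cross (edir xs (m - 1 - i)) (edir xs (m - 1 - i - 1))"
    by (rule cross_commute)+
  ultimately show ?thesis
    using True has_both_neighbours_rev[OF assms] by (simp add: inflection_edge_def m_def mult_ac)
qed (use has_both_neighbours_rev[OF assms] in \<open>simp add: inflection_edge_def\<close>)

lemma non_inflection_edge_rev:
  "i < nedges xs \<Longrightarrow>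
     non_inflection_edge (rev xs) i \<longleftrightarrow> non_inflection_edge xs (nedges xs - 1 - i)"
  by (simp add: non_inflection_edge_def has_both_neighbours_rev inflection_edge_rev)

lemma dcc_path_rev_imp:
  assumes "dcc_path \<theta> l xs"
  shows "dcc_path \<theta> l (rev xs)"
proof (rule dcc_pathI)
  show "rev xs \<noteq> []"
    using dcc_pathD(1)[OF assms] by simp
next
  fix i assume "i < nedges (rev xs)"
  then show "edir (rev xs) i \<noteq> 0"
    using dcc_pathD(2)[OF assms] by (simp add: edir_rev)
next
  fix j assume j: "0 < j" "j < nedges (rev xs)"
  then have "dir_angle (edir xs (nedges xs - 1 - j)) (edir xs (nedges xs - j)) \<le> \<theta>"
    using dcc_pathD(3)[OF assms, of "nedges xs - j"] by (simp add: Suc_diff_Suc)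
  then show "dir_angle (edir (rev xs) (j - 1)) (edir (rev xs) j) \<le> \<theta>"
    using j by (simp add: edir_rev dir_angle_commute Suc_diff_Suc)
next
  fix i assume "Suc i < nedges (rev xs)"
  then show "\<not> (short_edge l (rev xs) i \<and> short_edge l (rev xs) (Suc i))"
    using dcc_pathD(4)[OF assms, of "nedges xs - 1 - Suc i"]
    by (auto simp: short_edge_rev Suc_diff_Suc)
next
  fix i assume i: "short_edge l (rev xs) i" "non_inflection_edge (rev xs) i"
  then have "0 < i" "Suc i < nedges xs"
    by (auto simp: non_inflection_edge_def has_both_neighbours_def)
  then show "dir_angle (edir (rev xs) (i - 1)) (edir (rev xs) (Suc i)) \<le> \<theta>"
    using i dcc_pathD(5)[OF assms, of "nedges xs - 1 - i"]
    by (simp add: short_edge_rev non_inflection_edge_rev edir_rev dir_angle_commute Suc_diff_Suc)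
qed

lemma dcc_path_rev [simp]: "dcc_path \<theta> l (rev xs) \<longleftrightarrow> dcc_path \<theta> l xs"
  using dcc_path_rev_imp[of \<theta> l xs] dcc_path_rev_imp[of \<theta> l "rev xs"] by auto

lemma path_length_rev [simp]: "path_length (rev xs) = path_length xs"
proof -
  have "path_length (rev xs) = (\<Sum>i<nedges xs. norm (edir xs (nedges xs - 1 - i)))"
    unfolding path_length_def by (intro sum.cong) (simp_all add: edir_rev)
  also have "\<dots> = path_length xs"
    unfolding path_length_def
    by (rule sum.reindex_bij_witness[of _ "\<lambda>i. nedges xs - 1 - i" "\<lambda>i. nedges xs - 1 - i"]) auto
  finally show ?thesis .
qed

section \<open>Sliding a vertex along an edge\<close>

definition slide :: "complex list \<Rightarrow> nat \<Rightarrow> real \<Rightarrow> complex list" where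
  "slide xs q t = xs[q := xs ! q + t *\<^sub>R edir xs q]"

lemma length_slide [simp]: "length (slide xs q t) = length xs"
  by (simp add: slide_def)

lemma nedges_slide [simp]: "nedges (slide xs q t) = nedges xs"
  by (simp add: nedges_def)

lemma edir_slide:
  assumes "q < length xs"
  shows "edir (slide xs q t) i =
    (if Suc i = q then edir xs i + t *\<^sub>R edir xs q
     else if i = q then (1 - t) *\<^sub>R edir xs q else edir xs i)"
  using assms by (auto simp: slide_def edir_def nth_list_update algebra_simps)

lemma path_length_slide_less:
  assumes q: "0 < q" "q < nedges xs" and t: "0 < t" "t \<le> 1"
    and turn: "cross (edir xs (q - 1)) (edir xs q) \<noteq> 0"
  shows "path_length (slide xs q t) < path_length xs"
proof -
  define A where "A = {..<nedges xs} - {q - 1} - {q}"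
  have split: "(\<Sum>i<nedges xs. f i) = f (q - 1) + f q + (\<Sum>i\<in>A. f i)" for f :: "nat \<Rightarrow> real"
    using q by (simp add: A_def sum.remove[of _ "q - 1"] sum.remove[of _ q])
  have len: "q < length xs"
    using q by (simp add: nedges_def)
  have "edir (slide xs q t) i = edir xs i" if "i \<in> A" for i
    using that len by (auto simp: A_def edir_slide)
  then have rest: "(\<Sum>i\<in>A. norm (edir (slide xs q t) i)) = (\<Sum>i\<in>A. norm (edir xs i))"
    by simp
  have "path_length (slide xs q t) = norm (edir (slide xs q t) (q - 1)) + norm (edir (slide xs q t) q)
      + (\<Sum>i\<in>A. norm (edir (slide xs q t) i))"
    unfolding path_length_def nedges_slide by (rule split)
  also have "\<dots> = norm (edir xs (q - 1) + t *\<^sub>R edir xs q) + (1 - t) * norm (edir xs q)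
      + (\<Sum>i\<in>A. norm (edir xs i))"
    using q t len rest by (simp add: edir_slide)
  also have "\<dots> < norm (edir xs (q - 1)) + norm (edir xs q) + (\<Sum>i\<in>A. norm (edir xs i))"
    using norm_add_scaleR_less[OF turn t(1)] by (simp add: algebra_simps)
  also have "\<dots> = path_length xs"
    unfolding path_length_def by (rule split[symmetric])
  finally show ?thesis .
qed

lemma inflection_edge_iff_sgn:
  "inflection_edge xs i \<longleftrightarrow> has_both_neighbours xs i \<and>
     sgn (cross (edir xs (i - 1)) (edir xs i)) * sgn (cross (edir xs i) (edir xs (Suc i))) < 0"
  by (simp add: inflection_edge_def sgn_mult[symmetric])

definition shortenable_at :: "real \<Rightarrow> real \<Rightarrow> complex list \<Rightarrow> nat \<Rightarrow> bool" where
  "shortenable_at \<theta> l xs k \<longleftrightarrow>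
     (\<exists>w. dcc_path \<theta> l (xs[k := w]) \<and> path_length (xs[k := w]) < path_length xs)"

lemma not_long_edge_iff: "\<not> long_edge l xs i \<longleftrightarrow> short_edge l xs i \<or> normal_edge l xs i"
  by (auto simp: long_edge_def short_edge_def normal_edge_def)

lemma eventually_at_right_0_less_1: "\<forall>\<^sub>F t in at_right 0. 0 < t \<and> t < (1::real)"
  unfolding eventually_at_right_field by (intro exI[of _ 1]) auto

context
  fixes \<theta> l :: real and xs :: "complex list" and p :: nat
  assumes dcc: "dcc_path \<theta> l xs" and \<theta>: "\<theta> \<le> pi / 2" and inflection: "inflection_edge xs p"
begin

private lemma bounds: "0 < p" "Suc p < nedges xs" "Suc (Suc p) < length xs"
  using inflection by (auto simp: inflection_edge_def has_both_neighbours_def nedges_def)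

private lemma edir_slide_Suc:
  "edir (slide xs (Suc p) t) i =
    (if i = p then edir xs p + t *\<^sub>R edir xs (Suc p)
     else if i = Suc p then (1 - t) *\<^sub>R edir xs (Suc p) else edir xs i)"
  using bounds by (simp add: edir_slide)

private lemma edir_nonzero: "i < nedges xs \<Longrightarrow> edir xs i \<noteq> 0"
  using dcc_pathD(2)[OF dcc] .

private lemma cross_inflection: "cross (edir xs (p - 1)) (edir xs p) * cross (edir xs p) (edir xs (Suc p)) < 0"
  using inflection by (simp add: inflection_edge_def)

private lemma norm_edir_le_slide:
  assumes "0 \<le> t"
  shows "norm (edir xs p) \<le> norm (edir xs p + t *\<^sub>R edir xs (Suc p))"
proof -
  have "0 \<le> inner (edir xs p) (edir xs (Suc p))"
    using inner_nonneg_if_dir_angle_le[OF dcc_pathD(3)[OF dcc, of "Suc p"] \<theta>] bounds by simp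
  then have "0 \<le> 2 * t * inner (edir xs p) (edir xs (Suc p)) + t\<^sup>2 * (norm (edir xs (Suc p)))\<^sup>2"
    using assms by simp
  then have "(norm (edir xs p))\<^sup>2 \<le> (norm (edir xs p + t *\<^sub>R edir xs (Suc p)))\<^sup>2"
    unfolding norm_add_scaleR_square by linarith
  then show ?thesis
    by (rule power2_le_imp_le) simp
qed

lemma eventually_short_edge_slide:
  "\<forall>\<^sub>F t in at_right 0. \<forall>i. short_edge l (slide xs (Suc p) t) i \<longleftrightarrow>
     (if i = Suc p then \<not> long_edge l xs (Suc p) else short_edge l xs i)"
proof -
  have "((\<lambda>t. norm (edir xs p + t *\<^sub>R edir xs (Suc p))) \<longlongrightarrow> norm (edir xs p)) (at_right 0)"
    by (auto intro!: tendsto_eq_intros)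
  then have short: "\<forall>\<^sub>F t in at_right 0. short_edge l xs p \<longrightarrow> norm (edir xs p + t *\<^sub>R edir xs (Suc p)) < l"
    by (cases "short_edge l xs p") (auto simp: short_edge_def order_tendstoD(2))
  have "((\<lambda>t. (1 - t) * norm (edir xs (Suc p))) \<longlongrightarrow> norm (edir xs (Suc p))) (at_right 0)"
    by (auto intro!: tendsto_eq_intros)
  then have long: "\<forall>\<^sub>F t in at_right 0. long_edge l xs (Suc p) \<longrightarrow> l < (1 - t) * norm (edir xs (Suc p))"
    by (cases "long_edge l xs (Suc p)") (auto simp: long_edge_def order_tendstoD(1))
  show ?thesis
    using eventually_at_right_0_less_1 short long
  proof eventually_elim
    case (elim t)
    have "0 < norm (edir xs (Suc p))"
      using edir_nonzero bounds by simp
    then have "(1 - t) * norm (edir xs (Suc p)) < norm (edir xs (Suc p))"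
      using elim(1) by simp
    then show ?case
      using elim norm_edir_le_slide[of t]
      by (auto simp: short_edge_def long_edge_def edir_slide_Suc not_less)
  qed
qed

lemma eventually_sgn_cross_slide:
  "\<forall>\<^sub>F t in at_right 0. \<forall>j.
     sgn (cross (edir (slide xs (Suc p) t) (j - 1)) (edir (slide xs (Suc p) t) j))
       = sgn (cross (edir xs (j - 1)) (edir xs j))"
proof -
  let ?c = "cross (edir xs (p - 1)) (edir xs p)"
  have "((\<lambda>t. cross (edir xs (p - 1)) (edir xs p + t *\<^sub>R edir xs (Suc p)) * ?c) \<longlongrightarrow> ?c * ?c) (at_right 0)"
    by (auto simp: cross_add_right intro!: tendsto_eq_intros)
  moreover have "?c \<noteq> 0"
    using cross_inflection by auto
  then have "0 < ?c * ?c"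
    by (metis not_real_square_gt_zero)
  ultimately have "\<forall>\<^sub>F t in at_right 0. 0 < cross (edir xs (p - 1)) (edir xs p + t *\<^sub>R edir xs (Suc p)) * ?c"
    by (rule order_tendstoD(1))
  with eventually_at_right_0_less_1 show ?thesis
  proof eventually_elim
    case (elim t)
    have "p - 1 \<noteq> p" "p - 1 \<noteq> Suc p"
      using bounds by auto
    then have "sgn (cross (edir xs (p - 1)) (edir xs p + t *\<^sub>R edir xs (Suc p))) = sgn ?c"
      using elim(2) by (auto simp: sgn_if zero_less_mult_iff)
    moreover have "sgn (1 - t) = 1"
      using elim(1) by simp
    ultimately show ?case
      using \<open>p - 1 \<noteq> p\<close> \<open>p - 1 \<noteq> Suc p\<close>
      by (simp add: edir_slide_Suc sgn_mult cross_add_left)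
  qed
qed

lemma eventually_inflection_edge_slide:
  "\<forall>\<^sub>F t in at_right 0. \<forall>i. inflection_edge (slide xs (Suc p) t) i \<longleftrightarrow> inflection_edge xs i"
  using eventually_sgn_cross_slide
proof eventually_elim
  case (elim t)
  show ?case
  proof
    fix i
    show "inflection_edge (slide xs (Suc p) t) i \<longleftrightarrow> inflection_edge xs i"
      using elim[rule_format, of i] elim[rule_format, of "Suc i"]
      by (simp add: inflection_edge_iff_sgn has_both_neighbours_def)
  qed
qed

lemma eventually_turns_slide:
  "\<forall>\<^sub>F t in at_right 0. \<forall>j. 0 < j \<and> j < nedges xs \<longrightarrow>
     dir_angle (edir (slide xs (Suc p) t) (j - 1)) (edir (slide xs (Suc p) t) j) \<le> \<theta>"
proof -
  note turn = dcc_pathD(3)[OF dcc]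
  have "0 < cross (edir xs p) (edir xs (p - 1)) * cross (edir xs p) (edir xs (Suc p))"
    using cross_inflection cross_commute[of "edir xs p" "edir xs (p - 1)"] by simp
  then have at_p: "\<forall>\<^sub>F t in at_right 0. dir_angle (edir xs (p - 1)) (edir xs p + t *\<^sub>R edir xs (Suc p)) \<le> \<theta>"
    using bounds by (intro eventually_dir_angle_le_add edir_nonzero turn \<theta>) auto
  have "cross (edir xs p) (edir xs (Suc p)) \<noteq> 0"
    using cross_inflection by auto
  then have at_Suc_p: "\<forall>\<^sub>F t in at_right 0. dir_angle (edir xs (Suc p)) (edir xs p + t *\<^sub>R edir xs (Suc p)) \<le> \<theta>"
    using bounds turn[of "Suc p"]
    by (intro eventually_dir_angle_le_add edir_nonzero \<theta>) (auto simp: dir_angle_commute)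
  show ?thesis
    using eventually_at_right_0_less_1 at_p at_Suc_p
  proof eventually_elim
    case (elim t)
    show ?case
    proof (intro allI impI)
      fix j assume j: "0 < j \<and> j < nedges xs"
      have "p - 1 \<noteq> p" "p - 1 \<noteq> Suc p"
        using bounds by auto
      then show "dir_angle (edir (slide xs (Suc p) t) (j - 1)) (edir (slide xs (Suc p) t) j) \<le> \<theta>"
        using elim j turn[of j] by (auto simp: edir_slide_Suc dir_angle_commute)
    qed
  qed
qed

private lemma eventually_turn_before_slide:
  "\<forall>\<^sub>F t in at_right 0. short_edge l xs (p - 1) \<and> non_inflection_edge xs (p - 1) \<longrightarrow>
     dir_angle (edir xs (p - 2)) (edir xs p + t *\<^sub>R edir xs (Suc p)) \<le> \<theta>"
proof (cases "short_edge l xs (p - 1) \<and> non_inflection_edge xs (p - 1)")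
  case True
  then have p: "0 < p - 1" and non_inflection: "\<not> inflection_edge xs (p - 1)"
    by (auto simp: non_inflection_edge_def has_both_neighbours_def)
  have indices: "p - 1 - 1 = p - 2" "Suc (p - 1) = p" "p - 2 < nedges xs" "p - 1 < nedges xs"
    using p bounds by auto
  note turn = dcc_pathD(3)[OF dcc]
  have old: "dir_angle (edir xs (p - 2)) (edir xs p) \<le> \<theta>"
    using dcc_pathD(5)[OF dcc, of "p - 1"] True indices by simp
  have "0 < cross (edir xs (p - 2)) (edir xs p) * cross (edir xs (p - 1)) (edir xs p)"
  proof (rule cross_compose_pos_right)
    show "0 \<le> cross (edir xs (p - 2)) (edir xs (p - 1)) * cross (edir xs (p - 1)) (edir xs p)"
      using non_inflection p bounds indices by (simp add: inflection_edge_def has_both_neighbours_def)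
    have "dir_angle (edir xs (p - 2)) (edir xs (p - 1)) \<le> \<theta>"
      using turn[of "p - 1"] p indices by simp
    then show "0 \<le> inner (edir xs (p - 2)) (edir xs (p - 1))"
      using inner_nonneg_if_dir_angle_le \<theta> by blast
    show "0 \<le> inner (edir xs (p - 1)) (edir xs p)"
      using inner_nonneg_if_dir_angle_le[OF turn[of p] \<theta>] bounds by simp
    show "0 \<le> inner (edir xs (p - 2)) (edir xs p)"
      using inner_nonneg_if_dir_angle_le[OF old \<theta>] .
  qed (use cross_inflection edir_nonzero indices in auto)
  then have "0 < cross (edir xs p) (edir xs (p - 2)) * cross (edir xs p) (edir xs (Suc p))"
    using cross_inflection cross_commute[of "edir xs p" "edir xs (p - 2)"]
    by (auto simp: zero_less_mult_iff mult_less_0_iff)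
  then have "\<forall>\<^sub>F t in at_right 0. dir_angle (edir xs (p - 2)) (edir xs p + t *\<^sub>R edir xs (Suc p)) \<le> \<theta>"
    using bounds indices by (intro eventually_dir_angle_le_add old edir_nonzero \<theta>) auto
  then show ?thesis
    by (rule eventually_mono) simp
qed auto

private lemma eventually_turn_after_slide:
  "\<forall>\<^sub>F t in at_right 0. short_edge l xs (Suc p) \<and> non_inflection_edge xs (Suc p) \<longrightarrow>
     dir_angle (edir xs (Suc (Suc p))) (edir xs p + t *\<^sub>R edir xs (Suc p)) \<le> \<theta>"
proof (cases "short_edge l xs (Suc p) \<and> non_inflection_edge xs (Suc p)")
  case True
  then have p: "Suc (Suc p) < nedges xs" and non_inflection: "\<not> inflection_edge xs (Suc p)"
    by (auto simp: non_inflection_edge_def has_both_neighbours_def)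
  note turn = dcc_pathD(3)[OF dcc]
  have old: "dir_angle (edir xs p) (edir xs (Suc (Suc p))) \<le> \<theta>"
    using dcc_pathD(5)[OF dcc, of "Suc p"] True by simp
  have "0 < cross (edir xs p) (edir xs (Suc (Suc p))) * cross (edir xs p) (edir xs (Suc p))"
  proof (rule cross_compose_pos_left)
    show "0 \<le> cross (edir xs p) (edir xs (Suc p)) * cross (edir xs (Suc p)) (edir xs (Suc (Suc p)))"
      using non_inflection p by (simp add: inflection_edge_def has_both_neighbours_def)
    show "0 \<le> inner (edir xs p) (edir xs (Suc p))"
      using inner_nonneg_if_dir_angle_le[OF turn[of "Suc p"] \<theta>] p by simp
    show "0 \<le> inner (edir xs (Suc p)) (edir xs (Suc (Suc p)))"
      using inner_nonneg_if_dir_angle_le[OF turn[of "Suc (Suc p)"] \<theta>] p by simp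
    show "0 \<le> inner (edir xs p) (edir xs (Suc (Suc p)))"
      using inner_nonneg_if_dir_angle_le[OF old \<theta>] .
  qed (use cross_inflection edir_nonzero p in auto)
  then have "\<forall>\<^sub>F t in at_right 0. dir_angle (edir xs (Suc (Suc p))) (edir xs p + t *\<^sub>R edir xs (Suc p)) \<le> \<theta>"
    using bounds p old
    by (intro eventually_dir_angle_le_add edir_nonzero \<theta>) (auto simp: dir_angle_commute)
  then show ?thesis
    by (rule eventually_mono) simp
qed auto

lemma eventually_non_inflection_edge_slide:
  "\<forall>\<^sub>F t in at_right 0. \<forall>i. non_inflection_edge (slide xs (Suc p) t) i \<longleftrightarrow> non_inflection_edge xs i"
  using eventually_inflection_edge_slide
  by eventually_elim (simp add: non_inflection_edge_def has_both_neighbours_def)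

lemma eventually_short_turns_slide:
  assumes normal: "normal_edge l xs (Suc p) \<Longrightarrow> Suc (Suc p) < nedges xs \<Longrightarrow> inflection_edge xs (Suc p)"
  shows "\<forall>\<^sub>F t in at_right 0. \<forall>i.
     short_edge l (slide xs (Suc p) t) i \<and> non_inflection_edge (slide xs (Suc p) t) i \<longrightarrow>
       dir_angle (edir (slide xs (Suc p) t) (i - 1)) (edir (slide xs (Suc p) t) (Suc i)) \<le> \<theta>"
  using eventually_at_right_0_less_1 eventually_short_edge_slide
    eventually_turn_before_slide eventually_turn_after_slide eventually_non_inflection_edge_slide
proof eventually_elim
  case (elim t)
  show ?case
  proof (intro allI impI)
    fix i assume i: "short_edge l (slide xs (Suc p) t) i \<and> non_inflection_edge (slide xs (Suc p) t) i"
    then have ni: "non_inflection_edge xs i"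
      using elim(5) by blast
    then have hb: "0 < i" "Suc i < nedges xs"
      by (auto simp: non_inflection_edge_def has_both_neighbours_def)
    have short: "short_edge l xs i" if "i \<noteq> Suc p"
      using i elim(2) that by auto
    consider "Suc i = p" | "i = p" | "i = Suc p" | "i = Suc (Suc p)"
      | "Suc i \<noteq> p" "i \<noteq> p" "i \<noteq> Suc p" "i \<noteq> Suc (Suc p)"
      by blast
    then show "dir_angle (edir (slide xs (Suc p) t) (i - 1)) (edir (slide xs (Suc p) t) (Suc i)) \<le> \<theta>"
    proof cases
      case 1
      then have "i = p - 1" "i - 1 = p - 2" "p - 2 \<noteq> p" "p - 2 \<noteq> Suc p"
        by auto
      then show ?thesis
        using elim(3) short ni by (simp add: edir_slide_Suc)
    next
      case 2
      then show ?thesis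
        using ni inflection by (simp add: non_inflection_edge_def)
    next
      case 3
      have "\<not> normal_edge l xs (Suc p)"
        using normal ni hb 3 by (auto simp: non_inflection_edge_def)
      then have "short_edge l xs (Suc p)"
        using i elim(2) 3 not_long_edge_iff by auto
      then show ?thesis
        using elim(4) ni 3 by (simp add: edir_slide_Suc dir_angle_commute)
    next
      case 4
      then show ?thesis
        using dcc_pathD(5)[OF dcc short ni] elim(1) by (simp add: edir_slide_Suc)
    next
      case 5
      then have "i - 1 \<noteq> p" "i - 1 \<noteq> Suc p"
        using hb by auto
      then show ?thesis
        using dcc_pathD(5)[OF dcc short ni] 5 by (simp add: edir_slide_Suc)
    qed
  qed
qed

text \<open>A normal edge \<open>p + 1\<close> becomes short; the hypothesis keeps it away from short neighbours and,
  as an inflection edge, exempts it from condition (iii).\<close>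

lemma eventually_dcc_path_slide:
  assumes normal: "normal_edge l xs (Suc p) \<Longrightarrow> \<not> short_edge l xs p \<and>
    (Suc (Suc p) < nedges xs \<longrightarrow> \<not> short_edge l xs (Suc (Suc p)) \<and> inflection_edge xs (Suc p))"
  shows "\<forall>\<^sub>F t in at_right 0. dcc_path \<theta> l (slide xs (Suc p) t)"
proof -
  have "\<forall>\<^sub>F t in at_right 0. \<forall>i.
     short_edge l (slide xs (Suc p) t) i \<and> non_inflection_edge (slide xs (Suc p) t) i \<longrightarrow>
       dir_angle (edir (slide xs (Suc p) t) (i - 1)) (edir (slide xs (Suc p) t) (Suc i)) \<le> \<theta>"
    by (rule eventually_short_turns_slide) (use normal in blast)
  with eventually_at_right_0_less_1 eventually_short_edge_slide eventually_turns_slide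
  show ?thesis
  proof eventually_elim
    case (elim t)
    show ?case
    proof (rule dcc_pathI)
      show "slide xs (Suc p) t \<noteq> []"
        using dcc_pathD(1)[OF dcc] by (simp add: slide_def)
    next
      fix i assume "i < nedges (slide xs (Suc p) t)"
      then show "edir (slide xs (Suc p) t) i \<noteq> 0"
        using elim(1) edir_nonzero[of i] edir_nonzero[of p] norm_edir_le_slide[of t] bounds
        by (auto simp: edir_slide_Suc)
    next
      fix i assume "Suc i < nedges (slide xs (Suc p) t)"
      then show "\<not> (short_edge l (slide xs (Suc p) t) i \<and> short_edge l (slide xs (Suc p) t) (Suc i))"
        using elim(2) normal dcc_pathD(4)[OF dcc] bounds
        by (auto simp: not_long_edge_iff)
    qed (use elim(3,4) in auto)
  qed
qed

lemma shortenable_at_Suc_inflection_edge: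
  assumes "normal_edge l xs (Suc p) \<Longrightarrow> \<not> short_edge l xs p \<and>
    (Suc (Suc p) < nedges xs \<longrightarrow> \<not> short_edge l xs (Suc (Suc p)) \<and> inflection_edge xs (Suc p))"
  shows "shortenable_at \<theta> l xs (Suc p)"
proof -
  obtain t where t: "dcc_path \<theta> l (slide xs (Suc p) t)" "0 < t" "t < 1"
    using eventually_happens[OF eventually_conj[OF eventually_dcc_path_slide[OF assms]
          eventually_at_right_0_less_1]] by auto
  moreover have "path_length (slide xs (Suc p) t) < path_length xs"
    using t bounds cross_inflection by (intro path_length_slide_less) auto
  ultimately show ?thesis
    unfolding shortenable_at_def slide_def by blast
qed

end

lemma shortenable_at_rev:
  assumes "k < length xs"
  shows "shortenable_at \<theta> l (rev xs) (length xs - 1 - k) \<longleftrightarrow> shortenable_at \<theta> l xs k"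
proof -
  have "(rev xs)[length xs - 1 - k := w] = rev (xs[k := w])" for w
    using assms by (simp add: rev_update)
  then show ?thesis
    by (simp add: shortenable_at_def)
qed

lemma shortenable_at_inflection_edge:
  assumes dcc: "dcc_path \<theta> l xs" and \<theta>: "\<theta> \<le> pi / 2" and inflection: "inflection_edge xs q"
    and normal: "normal_edge l xs (q - 1) \<Longrightarrow> \<not> short_edge l xs q \<and>
      (0 < q - 1 \<longrightarrow> \<not> short_edge l xs (q - 2) \<and> inflection_edge xs (q - 1))"
  shows "shortenable_at \<theta> l xs q"
proof -
  define m where "m = nedges xs"
  define p where "p = m - 1 - q"
  have q: "0 < q" "Suc q < m"
    using inflection by (auto simp: inflection_edge_def has_both_neighbours_def m_def)
  have indices: "m - 1 - p = q" "m - 1 - Suc p = q - 1" "m - 1 - Suc (Suc p) = q - 2"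
    "Suc p < m" "Suc (Suc p) < m \<longleftrightarrow> 0 < q - 1" "length xs - 1 - Suc p = q"
    using q by (auto simp: p_def m_def nedges_def)
  have "shortenable_at \<theta> l (rev xs) (Suc p)"
  proof (rule shortenable_at_Suc_inflection_edge)
    show "dcc_path \<theta> l (rev xs)"
      using dcc by simp
    show "inflection_edge (rev xs) p"
      using inflection inflection_edge_rev[of p xs] indices by (simp add: m_def)
    show "normal_edge l (rev xs) (Suc p) \<Longrightarrow> \<not> short_edge l (rev xs) p \<and>
        (Suc (Suc p) < nedges (rev xs) \<longrightarrow>
          \<not> short_edge l (rev xs) (Suc (Suc p)) \<and> inflection_edge (rev xs) (Suc p))"
      using normal indices
      by (simp add: m_def normal_edge_rev short_edge_rev inflection_edge_rev)
  qed (rule \<theta>)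
  then show ?thesis
    using shortenable_at_rev[of "Suc p" "rev xs"] indices by (simp add: m_def nedges_def)
qed

lemma shortenable_at_after_inflection_edge:
  assumes dcc: "dcc_path \<theta> l xs" and \<theta>: "\<theta> \<le> pi / 2"
    and last: "\<not> short_edge l xs (nedges xs - 1)"
    and inflection: "inflection_edge xs i" and i: "Suc (Suc i) < nedges xs"
    and neighbour: "\<not> (normal_edge l xs (Suc i) \<and> non_inflection_edge xs (Suc i))"
  shows "\<exists>k. 1 < k \<and> Suc k < nedges xs \<and> shortenable_at \<theta> l xs k"
proof -
  note shortenable_Suc = shortenable_at_Suc_inflection_edge[OF dcc \<theta>]
  have "0 < i"
    using inflection by (simp add: inflection_edge_def has_both_neighbours_def)
  have normal_not_short: "normal_edge l xs k \<Longrightarrow> \<not> short_edge l xs k" for k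
    by (simp add: normal_edge_def short_edge_def)
  consider (not_normal) "\<not> normal_edge l xs (Suc i)"
    | (normal_inflection) "normal_edge l xs (Suc i)" "inflection_edge xs (Suc i)"
    using neighbour i \<open>0 < i\<close> by (auto simp: non_inflection_edge_def has_both_neighbours_def)
  then show ?thesis
  proof cases
    case not_normal
    then have "shortenable_at \<theta> l xs (Suc i)"
      by (intro shortenable_Suc inflection) simp
    then show ?thesis
      using i \<open>0 < i\<close> by auto
  next
    case normal_inflection
    consider (backward) "\<not> (normal_edge l xs i \<and> short_edge l xs (i - 1))"
      | (forward) "normal_edge l xs i" "\<not> short_edge l xs (Suc (Suc i))"
      | (forward_next) "short_edge l xs (Suc (Suc i))"
      by blast
    then show ?thesis
    proof cases
      case backward
      have "shortenable_at \<theta> l xs (Suc i)"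
        by (rule shortenable_at_inflection_edge[OF dcc \<theta> normal_inflection(2)])
          (use backward normal_inflection normal_not_short inflection in auto)
      then show ?thesis
        using i \<open>0 < i\<close> by auto
    next
      case forward
      then have "shortenable_at \<theta> l xs (Suc i)"
        using normal_inflection normal_not_short
        by (intro shortenable_Suc inflection) auto
      then show ?thesis
        using i \<open>0 < i\<close> by auto
    next
      case forward_next
      then have "Suc (Suc i) \<noteq> nedges xs - 1"
        using last by auto
      moreover have "shortenable_at \<theta> l xs (Suc (Suc i))"
        using normal_inflection forward_next normal_not_short by (intro shortenable_Suc) auto
      ultimately show ?thesis
        using i by (intro exI[of _ "Suc (Suc i)"]) auto
    qed
  qed
qed

lemma shortenable_at_before_inflection_edge:
  assumes dcc: "dcc_path \<theta> l xs" and \<theta>: "\<theta> \<le> pi / 2"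
    and first: "\<not> short_edge l xs 0"
    and inflection: "inflection_edge xs i" and i: "1 < i"
    and neighbour: "\<not> (normal_edge l xs (i - 1) \<and> non_inflection_edge xs (i - 1))"
  shows "\<exists>k. 1 < k \<and> Suc k < nedges xs \<and> shortenable_at \<theta> l xs k"
proof -
  define m where "m = nedges xs"
  have i_m: "Suc i < m"
    using inflection by (simp add: inflection_edge_def has_both_neighbours_def m_def)
  have "\<exists>k. 1 < k \<and> Suc k < nedges (rev xs) \<and> shortenable_at \<theta> l (rev xs) k"
  proof (rule shortenable_at_after_inflection_edge)
    show "dcc_path \<theta> l (rev xs)"
      using dcc by simp
    show "\<not> short_edge l (rev xs) (nedges (rev xs) - 1)"
      using first i_m short_edge_rev[of "m - 1" xs l] by (simp add: m_def)
    show "inflection_edge (rev xs) (m - 1 - i)"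
      using inflection i_m inflection_edge_rev[of "m - 1 - i" xs] by (simp add: m_def)
    show "Suc (Suc (m - 1 - i)) < nedges (rev xs)"
      using i i_m by (simp add: m_def)
    have "Suc (m - 1 - i) < m" "m - 1 - Suc (m - 1 - i) = i - 1"
      using i i_m by auto
    then show "\<not> (normal_edge l (rev xs) (Suc (m - 1 - i)) \<and> non_inflection_edge (rev xs) (Suc (m - 1 - i)))"
      using neighbour by (simp add: m_def normal_edge_rev non_inflection_edge_rev)
  qed (rule \<theta>)
  then obtain k where k: "1 < k" "Suc k < m" "shortenable_at \<theta> l (rev xs) k"
    by (auto simp: m_def)
  then have "shortenable_at \<theta> l xs (m - k)"
    using shortenable_at_rev[of "m - k" xs] by (simp add: m_def nedges_def Suc_diff_Suc)
  moreover have "1 < m - k" "Suc (m - k) < m"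
    using k by auto
  ultimately show ?thesis
    by (auto simp: m_def)
qed

section \<open>Discrete Dubins paths\<close>

lemma path_length_Cons:
  assumes "xs \<noteq> []"
  shows "path_length (a # xs) = norm (hd xs - a) + path_length xs"
proof -
  have "path_length (a # xs) = norm (edir (a # xs) 0) + (\<Sum>i<nedges xs. norm (edir (a # xs) (Suc i)))"
    unfolding path_length_def nedges_Cons[OF assms] by (rule sum.lessThan_Suc_shift)
  then show ?thesis
    using assms by (cases xs) (simp_all add: edir_def path_length_def)
qed

lemma path_length_snoc:
  assumes "xs \<noteq> []"
  shows "path_length (xs @ [b]) = path_length xs + norm (b - last xs)"
proof -
  have "path_length (xs @ [b]) = (\<Sum>i<nedges xs. norm (edir (xs @ [b]) i)) + norm (edir (xs @ [b]) (nedges xs))"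
    using assms by (simp add: path_length_def)
  moreover have "edir (xs @ [b]) i = edir xs i" if "i < nedges xs" for i
    using that edir_append_infix[of i xs "[]" "[b]"] by (simp add: nedges_def)
  ultimately show ?thesis
    using assms by (simp add: path_length_def edir_def nedges_def nth_append last_conv_nth)
qed

lemma nedges_extended_path: "P \<noteq> [] \<Longrightarrow> nedges (extended_path P U V) = Suc (length P)"
  by (simp add: extended_path_def nedges_def)

lemma edir_extended_path_first: "P \<noteq> [] \<Longrightarrow> edir (extended_path P U V) 0 = U"
  by (cases P) (simp_all add: extended_path_def edir_def)

lemma edir_extended_path_last: "P \<noteq> [] \<Longrightarrow> edir (extended_path P U V) (length P) = V"
  by (simp add: extended_path_def edir_def nth_append last_conv_nth)

lemma path_length_extended_path:
  "P \<noteq> [] \<Longrightarrow> path_length (extended_path P U V) = norm U + path_length P + norm V"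
  by (simp add: extended_path_def path_length_Cons path_length_snoc)

lemma extended_path_update:
  assumes "0 < j" "Suc j < length P"
  shows "extended_path (P[j := w]) U V = (extended_path P U V)[Suc j := w]"
proof -
  have "hd (P[j := w]) = hd P"
    using assms by (cases P; cases j) auto
  moreover have "last (P[j := w]) = last P"
    using assms by (subst last_list_update) auto
  ultimately show ?thesis
    using assms by (simp add: extended_path_def list_update_append)
qed

lemma dcc_path_extended_path:
  assumes "starts_at \<theta> l P u U" "ends_at \<theta> l P v V" "3 \<le> length P"
  shows "dcc_path \<theta> l (extended_path P U V)"
  using dcc_path_overlap_append[of \<theta> l "[hd P - U]" P "[last P + V]"] assms
  by (simp add: starts_at_def ends_at_def extended_path_def)

lemma discrete_dubins_path_not_shortenable:
  assumes dubins: "discrete_dubins_path \<theta> l u U v V P"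
    and k: "1 < k" "Suc k < nedges (extended_path P U V)"
  shows "\<not> shortenable_at \<theta> l (extended_path P U V) k"
proof
  assume "shortenable_at \<theta> l (extended_path P U V) k"
  then obtain w where w: "dcc_path \<theta> l ((extended_path P U V)[k := w])"
    "path_length ((extended_path P U V)[k := w]) < path_length (extended_path P U V)"
    unfolding shortenable_at_def by blast
  have P: "dcc_path \<theta> l P" "starts_at \<theta> l P u U" "ends_at \<theta> l P v V"
    using dubins by (simp_all add: discrete_dubins_path_def)
  then have "P \<noteq> []"
    by (simp add: starts_at_def)
  define Q where "Q = P[k - 1 := w]"
  have j: "0 < k - 1" "Suc (k - 1) < length P"
    using k \<open>P \<noteq> []\<close> by (simp_all add: nedges_extended_path)
  have Q: "extended_path Q U V = (extended_path P U V)[k := w]" "Q \<noteq> []" "hd Q = u" "last Q = v"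
    using extended_path_update[OF j] j k P(2,3) \<open>P \<noteq> []\<close>
    by (auto simp: Q_def starts_at_def ends_at_def hd_conv_nth last_list_update)
  then have ext: "dcc_path \<theta> l ((u - U) # Q @ [v + V])"
    using w(1) by (simp add: extended_path_def)
  have "dcc_path \<theta> l Q" "starts_at \<theta> l Q u U" "ends_at \<theta> l Q v V"
    using dcc_path_infix[of \<theta> l "[u - U]" Q "[v + V]"] dcc_path_infix[of \<theta> l "[]" "(u - U) # Q" "[v + V]"]
      dcc_path_infix[of \<theta> l "[u - U]" "Q @ [v + V]" "[]"] ext Q
    by (simp_all add: starts_at_def ends_at_def)
  then have "path_length P \<le> path_length Q"
    using dubins by (simp add: discrete_dubins_path_def)
  moreover have "path_length Q < path_length P"
    using w(2) Q(1,2) \<open>P \<noteq> []\<close> path_length_extended_path[of Q U V]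
      path_length_extended_path[of P U V] by simp
  ultimately show False
    by simp
qed

theorem lemma2:
  fixes \<theta> l :: real and u U v V :: complex and P :: "complex list"
  assumes "0 < \<theta>" and "\<theta> \<le> pi / 2" and "2 * pi / \<theta> \<in> \<int>" and "0 < l"
    and "norm U = l" and "norm V = l"
    and "discrete_dubins_path \<theta> l u U v V P"
    and "nonzero_turns (extended_path P U V)"
  shows "\<forall>i j. inflection_edge (extended_path P U V) i \<and> (j = i - 1 \<or> j = Suc i) \<and>
           0 < j \<and> Suc j < nedges (extended_path P U V) \<longrightarrow>
           normal_edge l (extended_path P U V) j \<and> non_inflection_edge (extended_path P U V) j"
proof (intro allI impI)
  fix i j
  let ?E = "extended_path P U V"
  assume "inflection_edge ?E i \<and> (j = i - 1 \<or> j = Suc i) \<and> 0 < j \<and> Suc j < nedges ?E"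
  then have i: "inflection_edge ?E i" and j: "j = i - 1 \<or> j = Suc i" "0 < j" "Suc j < nedges ?E"
    by auto
  have P: "starts_at \<theta> l P u U" "ends_at \<theta> l P v V" "P \<noteq> []"
    using assms(7) by (auto simp: discrete_dubins_path_def starts_at_def)
  have m: "nedges ?E = Suc (length P)"
    using P(3) by (rule nedges_extended_path)
  have "3 \<le> length P"
    using i j m by (auto simp: inflection_edge_def has_both_neighbours_def)
  then have dcc: "dcc_path \<theta> l ?E"
    by (rule dcc_path_extended_path[OF P(1,2)])
  have "\<not> short_edge l ?E 0" "\<not> short_edge l ?E (nedges ?E - 1)"
    using assms(5,6) P(3) m by (simp_all add: short_edge_def edir_extended_path_first edir_extended_path_last)
  then have "\<exists>k. 1 < k \<and> Suc k < nedges ?E \<and> shortenable_at \<theta> l ?E k"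
    if "\<not> (normal_edge l ?E j \<and> non_inflection_edge ?E j)"
    using j that shortenable_at_before_inflection_edge[OF dcc assms(2) _ i]
      shortenable_at_after_inflection_edge[OF dcc assms(2) _ i]
    by auto
  then show "normal_edge l ?E j \<and> non_inflection_edge ?E j"
    using discrete_dubins_path_not_shortenable[OF assms(7)] by blast
qed

end
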